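(* Let $F$ be a graph. (i) If every edge of $F$ lies in a cycle of $F$ of length at most $m+1$, then $\mathrm{rsat}(n,F)=\Omega(n^{1+1/m})$. (ii) If for every edge $e$ of $F$ the graph $F\setminus e$ has diameter at most $r$, then $\mathrm{rsat}(n,F)=\Omega(n^{1+1/r})$. (iii) If $F$ is connected, then there exists a constant $c=c_F$ such that $\liminf_{n\to\infty}\mathrm{rsat}(n,F)/n\le c$ if and only if $F$ contains a cut edge.
   Context: All graphs are finite and simple. For a graph $F$, a graph $G$ is $F$-saturated if $G$ contains no copy of $F$, but adding any edge between two non-adjacent vertices of $G$ creates a copy of $F$. A graph is regular if all vertices have the same degree. $\mathrm{rsat}(n,F)$ denotes the smallest number of edges of a regular $n$-vertex $F$-saturated graph, defined only for those $n$ for which such a graph exists; the asymptotic statements ($\Omega$, $\liminf$) are over those $n$ for which $\mathrm{rsat}(n,F)$ is defined. For an edge $e$ of $F$, $F\setminus e$ is the graph on the vertex set of $F$ with edge set $E(F)\setminus\{e\}$. A cut edge is an edge whose removal increases the number of connected components. *)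

theory Defs
  imports Complex_Main "HOL-Library.Landau_Symbols" "HOL-Library.Extended_Nat"
    "HOL-Library.Extended_Real" "HOL-Library.Liminf_Limsup"
begin

definition graph :: "'a set \<Rightarrow> 'a set set \<Rightarrow> bool" where
  "graph V E \<longleftrightarrow> finite V \<and> (\<forall>e\<in>E. \<exists>u v. e = {u, v} \<and> u \<noteq> v \<and> u \<in> V \<and> v \<in> V)"

definition contains_copy :: "'a set \<Rightarrow> 'a set set \<Rightarrow> 'b set \<Rightarrow> 'b set set \<Rightarrow> bool" where
  "contains_copy V E VF EF \<longleftrightarrow>
     (\<exists>f. inj_on f VF \<and> f ` VF \<subseteq> V \<and> (\<forall>u v. {u, v} \<in> EF \<longrightarrow> {f u, f v} \<in> E))"

definition saturated :: "'a set \<Rightarrow> 'a set set \<Rightarrow> 'b set \<Rightarrow> 'b set set \<Rightarrow> bool" where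
  "saturated V E VF EF \<longleftrightarrow> \<not> contains_copy V E VF EF \<and>
     (\<forall>u\<in>V. \<forall>v\<in>V. u \<noteq> v \<and> {u, v} \<notin> E \<longrightarrow> contains_copy V (insert {u, v} E) VF EF)"

definition degree :: "'a set \<Rightarrow> 'a set set \<Rightarrow> 'a \<Rightarrow> nat" where
  "degree V E v = card {u \<in> V. {u, v} \<in> E}"

definition regular :: "'a set \<Rightarrow> 'a set set \<Rightarrow> bool" where
  "regular V E \<longleftrightarrow> (\<exists>d. \<forall>v\<in>V. degree V E v = d)"

text \<open>n-vertex graphs are taken on the vertex set {0..<n} (up to isomorphism this is all of them).\<close>
definition rsat_graphs :: "nat \<Rightarrow> 'b set \<Rightarrow> 'b set set \<Rightarrow> nat set set set" where
  "rsat_graphs n VF EF = {E. graph {0..<n} E \<and> regular {0..<n} E \<and> saturated {0..<n} E VF EF}"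

definition rsat_defined :: "nat \<Rightarrow> 'b set \<Rightarrow> 'b set set \<Rightarrow> bool" where
  "rsat_defined n VF EF \<longleftrightarrow> rsat_graphs n VF EF \<noteq> {}"

definition rsat :: "nat \<Rightarrow> 'b set \<Rightarrow> 'b set set \<Rightarrow> nat" where
  "rsat n VF EF = Inf (card ` rsat_graphs n VF EF)"

definition rsat_filter :: "'b set \<Rightarrow> 'b set set \<Rightarrow> nat filter" where
  "rsat_filter VF EF = inf sequentially (principal {n. rsat_defined n VF EF})"

definition walk :: "'a set \<Rightarrow> 'a set set \<Rightarrow> 'a list \<Rightarrow> bool" where
  "walk V E xs \<longleftrightarrow> xs \<noteq> [] \<and> set xs \<subseteq> V \<and>
     (\<forall>i. i + 1 < length xs \<longrightarrow> {xs ! i, xs ! (i + 1)} \<in> E)"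

definition reachable :: "'a set \<Rightarrow> 'a set set \<Rightarrow> 'a \<Rightarrow> 'a \<Rightarrow> bool" where
  "reachable V E u v \<longleftrightarrow> (\<exists>xs. walk V E xs \<and> hd xs = u \<and> last xs = v)"

definition dist :: "'a set \<Rightarrow> 'a set set \<Rightarrow> 'a \<Rightarrow> 'a \<Rightarrow> enat" where
  "dist V E u v = (INF xs \<in> {xs. walk V E xs \<and> hd xs = u \<and> last xs = v}. enat (length xs - 1))"

definition diameter :: "'a set \<Rightarrow> 'a set set \<Rightarrow> enat" where
  "diameter V E = (SUP u \<in> V. SUP v \<in> V. dist V E u v)"

definition connected_graph :: "'a set \<Rightarrow> 'a set set \<Rightarrow> bool" where
  "connected_graph V E \<longleftrightarrow> (\<forall>u\<in>V. \<forall>v\<in>V. reachable V E u v)"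

definition components :: "'a set \<Rightarrow> 'a set set \<Rightarrow> 'a set set" where
  "components V E = V // {(u, v). u \<in> V \<and> v \<in> V \<and> reachable V E u v}"

definition cut_edge :: "'a set \<Rightarrow> 'a set set \<Rightarrow> 'a set \<Rightarrow> bool" where
  "cut_edge V E e \<longleftrightarrow> e \<in> E \<and> card (components V (E - {e})) > card (components V E)"

definition in_cycle_of_length :: "'a set set \<Rightarrow> 'a set \<Rightarrow> nat \<Rightarrow> bool" where
  "in_cycle_of_length E e k \<longleftrightarrow> (\<exists>xs. length xs = k \<and> k \<ge> 3 \<and> distinct xs \<and>
     (\<forall>i<k. {xs ! i, xs ! ((i + 1) mod k)} \<in> E) \<and>
     (\<exists>i<k. e = {xs ! i, xs ! ((i + 1) mod k)}))"

end

theory Submission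
  imports Defs
begin

text \<open>If every edge {a, b} of F can be bypassed inside F by a walk of at most L steps, then in
  an F-saturated graph G any two non-adjacent vertices u, v are joined by a walk of at most L
  steps: adding uv creates a copy of F that must use the new edge, and the bypass of the
  corresponding edge of F is mapped into G. A regular F-saturated graph of degree d on n vertices
  thus has diameter at most L, so n \<le> (d + 1)^L, i.e. d \<ge> n^(1/L) - 1, and it has at least
  n^(1 + 1/L)/4 edges. Short cycles through all edges (i) or small diameters of all F - e (ii)
  provide such an L, and so does every connected F without cut edges (iii).
  Conversely, if F is connected and has a cut edge, disjoint cliques on |F| - 1 vertices form
  an F-saturated graph: F does not fit into one clique, but once two cliques are joined by an
  edge, the two sides of the cut edge embed into them.\<close>

lemma graph_edgeD:
  assumes "graph V E" "{x, y} \<in> E"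
  shows "x \<in> V" "y \<in> V" "x \<noteq> y"
  using assms unfolding graph_def by (metis doubleton_eq_iff)+

lemma graph_edgeE:
  assumes "graph V E" "e \<in> E"
  obtains x y where "e = {x, y}" "x \<in> V" "y \<in> V" "x \<noteq> y"
  using assms unfolding graph_def by blast

lemma finite_edges:
  assumes "graph V E"
  shows "finite E"
proof (rule finite_subset)
  show "E \<subseteq> Pow V"
    using assms by (auto elim: graph_edgeE)
  show "finite (Pow V)"
    using assms by (simp add: graph_def)
qed

lemma walk_singleton [simp]: "walk V E [x] \<longleftrightarrow> x \<in> V"
  by (simp add: walk_def)

lemma walk_Cons_Cons [simp]:
  "walk V E (x # y # xs) \<longleftrightarrow> x \<in> V \<and> {x, y} \<in> E \<and> walk V E (y # xs)"
  unfolding walk_def by (simp add: All_less_Suc2) blast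

lemma walk_rev [simp]: "walk V E (rev xs) \<longleftrightarrow> walk V E xs"
proof -
  have "walk V E (rev xs)" if "walk V E xs" for xs :: "'a list"
    unfolding walk_def
  proof (intro conjI allI impI)
    fix i assume i: "i + 1 < length (rev xs)"
    have "{xs ! (length xs - Suc (i + 1)), xs ! (length xs - Suc (i + 1) + 1)} \<in> E"
      using that i unfolding walk_def by simp
    then show "{rev xs ! i, rev xs ! (i + 1)} \<in> E"
      using i by (simp add: rev_nth Suc_diff_Suc insert_commute)
  qed (use that in \<open>auto simp: walk_def\<close>)
  from this[of xs] this[of "rev xs"] show ?thesis by auto
qed

lemma walk_map:
  assumes "walk V' E' xs" "f ` V' \<subseteq> V" "\<And>x y. {x, y} \<in> E' \<Longrightarrow> {f x, f y} \<in> E"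
  shows "walk V E (map f xs)"
  using assms unfolding walk_def by (auto simp: image_subset_iff)

lemma walk_between:
  assumes "walk V E xs" "{hd xs, last xs} = {u, v}"
  obtains ys where "walk V E ys" "hd ys = u" "last ys = v" "length ys = length xs"
proof (cases "hd xs = u")
  case True
  with assms show ?thesis
    by (intro that[of xs]) (auto simp: doubleton_eq_iff)
next
  case False
  moreover have "xs \<noteq> []"
    using assms by (simp add: walk_def)
  ultimately show ?thesis
    using assms by (intro that[of "rev xs"]) (auto simp: doubleton_eq_iff hd_rev last_rev)
qed

definition adjacent :: "'a set \<Rightarrow> 'a set set \<Rightarrow> 'a \<Rightarrow> 'a \<Rightarrow> bool" where
  "adjacent V E x y \<longleftrightarrow> x \<in> V \<and> y \<in> V \<and> {x, y} \<in> E"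

lemma walk_imp_rtranclp_adjacent:
  "walk V E xs \<Longrightarrow> (adjacent V E)\<^sup>*\<^sup>* (hd xs) (last xs)"
proof (induction xs rule: induct_list012)
  case (3 x y zs)
  then have walk_tl: "walk V E (y # zs)" and "x \<in> V" "{x, y} \<in> E"
    by simp_all
  moreover have "y \<in> V"
    using walk_tl by (simp add: walk_def)
  ultimately have "adjacent V E x y"
    by (simp add: adjacent_def)
  moreover have "(adjacent V E)\<^sup>*\<^sup>* y (last (y # zs))"
    using "3.IH"(2) walk_tl by simp
  ultimately show ?case
    by (simp add: converse_rtranclp_into_rtranclp)
qed (simp_all add: walk_def)

lemma rtranclp_adjacent_imp_walk:
  "(adjacent V E)\<^sup>*\<^sup>* u v \<Longrightarrow> u \<in> V \<Longrightarrow> \<exists>xs. walk V E xs \<and> hd xs = u \<and> last xs = v"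
proof (induction rule: converse_rtranclp_induct)
  case base
  then show ?case by (intro exI[of _ "[v]"]) simp
next
  case (step x y)
  then have "y \<in> V"
    by (simp add: adjacent_def)
  then obtain xs where xs: "walk V E xs" "hd xs = y" "last xs = v"
    using step.IH by blast
  then obtain zs where "xs = y # zs"
    by (cases xs) (auto simp: walk_def)
  with xs step.hyps(1) show ?case
    by (intro exI[of _ "x # xs"]) (simp add: adjacent_def)
qed

lemma reachable_iff_rtranclp:
  "reachable V E u v \<longleftrightarrow> u \<in> V \<and> (adjacent V E)\<^sup>*\<^sup>* u v"
  unfolding reachable_def
  using walk_imp_rtranclp_adjacent rtranclp_adjacent_imp_walk
  by (metis hd_in_set subsetD walk_def)

lemma reachable_sym: "reachable V E u v \<Longrightarrow> reachable V E v u"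
  unfolding reachable_def
  by (metis hd_rev last_rev walk_rev)

lemma reachable_refl: "x \<in> V \<Longrightarrow> reachable V E x x"
  by (simp add: reachable_iff_rtranclp)

lemma reachable_step:
  assumes "reachable V E a x" "y \<in> V" "{x, y} \<in> E"
  shows "reachable V E a y"
proof -
  have "x \<in> V"
    using assms(1) by (auto simp: reachable_def walk_def dest: last_in_set)
  with assms show ?thesis
    by (auto simp: reachable_iff_rtranclp adjacent_def intro: rtranclp.rtrancl_into_rtrancl)
qed

lemma components_eq_singleton:
  assumes "connected_graph V E" "V \<noteq> {}"
  shows "components V E = {V}"
proof -
  have "{(u, v). u \<in> V \<and> v \<in> V \<and> reachable V E u v} = V \<times> V"
    using assms(1) by (auto simp: connected_graph_def)
  with assms(2) show ?thesis
    by (auto simp: components_def quotient_def)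
qed

lemma two_le_card_components:
  assumes "finite V" "a \<in> V" "b \<in> V" "\<not> reachable V E a b"
  shows "2 \<le> card (components V E)"
proof -
  define R where "R = {(u, v). u \<in> V \<and> v \<in> V \<and> reachable V E u v}"
  have "b \<in> R `` {b}" "b \<notin> R `` {a}"
    using assms(3,4) reachable_refl[of b V E] by (simp_all add: R_def)
  then have "card {R `` {a}, R `` {b}} = 2"
    unfolding card_2_iff by blast
  moreover have "{R `` {a}, R `` {b}} \<subseteq> components V E"
    unfolding components_def R_def[symmetric] using assms(2,3) by (simp add: quotientI)
  moreover have "finite (components V E)"
    unfolding components_def using assms(1) by (rule finite_quotient) blast
  ultimately show ?thesis
    by (metis card_mono)
qed

lemma cut_edge_iff_not_reachable:
  assumes F: "graph V E" "connected_graph V E" and ab: "{a, b} \<in> E"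
  shows "cut_edge V E {a, b} \<longleftrightarrow> \<not> reachable V (E - {{a, b}}) a b"
proof -
  have "a \<in> V" "b \<in> V"
    using graph_edgeD[OF F(1) ab] by simp_all
  then have comps: "components V E = {V}"
    using components_eq_singleton[OF F(2)] by blast
  show ?thesis
  proof
    assume "cut_edge V E {a, b}"
    moreover have "components V (E - {{a, b}}) = {V}"
      if "reachable V (E - {{a, b}}) a b"
    proof -
      let ?R = "adjacent V (E - {{a, b}})"
      have "?R\<^sup>*\<^sup>* a b" "?R\<^sup>*\<^sup>* b a"
        using that reachable_sym[OF that] by (simp_all add: reachable_iff_rtranclp)
      have "?R\<^sup>*\<^sup>* x y" if "adjacent V E x y" for x y
      proof (cases "{x, y} = {a, b}")
        case True
        then show ?thesis
          using \<open>?R\<^sup>*\<^sup>* a b\<close> \<open>?R\<^sup>*\<^sup>* b a\<close> by (auto simp: doubleton_eq_iff)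
      next
        case False
        then show ?thesis
          using that by (intro r_into_rtranclp) (simp add: adjacent_def)
      qed
      then have "adjacent V E \<le> ?R\<^sup>*\<^sup>*"
        by blast
      then have "(adjacent V E)\<^sup>*\<^sup>* = ?R\<^sup>*\<^sup>*"
        by (intro rtranclp_subset) (auto simp: adjacent_def)
      then have "connected_graph V (E - {{a, b}})"
        using F(2) by (simp add: connected_graph_def reachable_iff_rtranclp)
      then show ?thesis
        using components_eq_singleton \<open>a \<in> V\<close> by blast
    qed
    ultimately show "\<not> reachable V (E - {{a, b}}) a b"
      using comps by (auto simp: cut_edge_def)
  next
    assume "\<not> reachable V (E - {{a, b}}) a b"
    then have "2 \<le> card (components V (E - {{a, b}}))"
      using two_le_card_components[OF _ \<open>a \<in> V\<close> \<open>b \<in> V\<close>] F(1) by (simp add: graph_def)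
    then show "cut_edge V E {a, b}"
      using comps ab by (simp add: cut_edge_def)
  qed
qed

section \<open>Detours\<close>

definition detour_bound :: "'a set \<Rightarrow> 'a set set \<Rightarrow> nat \<Rightarrow> bool" where
  "detour_bound V E L \<longleftrightarrow>
     (\<forall>e\<in>E. \<exists>xs. walk V (E - {e}) xs \<and> e = {hd xs, last xs} \<and> length xs \<le> L + 1)"

lemma cycle_detour:
  assumes G: "graph V E" and cycle: "in_cycle_of_length E e k"
  shows "\<exists>xs. walk V (E - {e}) xs \<and> e = {hd xs, last xs} \<and> length xs = k"
proof -
  obtain cs i where cs: "length cs = k" "3 \<le> k" "distinct cs"
      "\<And>j. j < k \<Longrightarrow> {cs ! j, cs ! ((j + 1) mod k)} \<in> E"
    and i: "i < k" "e = {cs ! i, cs ! ((i + 1) mod k)}"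
    using cycle unfolding in_cycle_of_length_def by blast
  \<comment> \<open>Rotate the cycle so that e joins its last and first vertex; the rest of it is the detour.\<close>
  define xs where "xs = rotate (Suc i) cs"
  have xs: "length xs = k" "distinct xs"
    using cs by (simp_all add: xs_def)
  have xs_nth: "xs ! j = cs ! ((Suc i + j) mod k)" if "j < k" for j
    unfolding xs_def using that cs(1) by (subst nth_rotate) simp_all
  have xs_edge: "{xs ! j, xs ! (j + 1)} \<in> E" if "j + 1 < k" for j
  proof -
    have "(Suc i + (j + 1)) mod k = ((Suc i + j) mod k + 1) mod k"
      by (simp add: mod_Suc_eq)
    then show ?thesis
      using that cs(4)[of "(Suc i + j) mod k"] cs(2) by (simp add: xs_nth)
  qed
  have e_xs: "e = {xs ! (k - 1), xs ! 0}"
  proof -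
    have "(Suc i + (k - 1)) mod k = i"
      using i(1) cs(2) by simp
    then show ?thesis
      using i cs(2) by (simp add: xs_nth insert_commute)
  qed
  have xs_ne: "xs \<noteq> []"
    using xs(1) cs(2) by auto
  have "walk V (E - {e}) xs"
    unfolding walk_def
  proof (intro conjI allI impI)
    show "set xs \<subseteq> V"
    proof
      fix x assume "x \<in> set xs"
      then obtain j where "j < k" "x = cs ! j"
        using cs(1) by (auto simp: xs_def in_set_conv_nth)
      then show "x \<in> V"
        using graph_edgeD(1)[OF G cs(4)] by blast
    qed
    fix j assume j: "j + 1 < length xs"
    have "{xs ! j, xs ! (j + 1)} \<noteq> {xs ! (k - 1), xs ! 0}"
      using j xs cs(2) by (auto simp: doubleton_eq_iff nth_eq_iff_index_eq)
    then show "{xs ! j, xs ! (j + 1)} \<in> E - {e}"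
      using xs_edge j xs(1) e_xs by simp
  qed (fact xs_ne)
  moreover have "e = {hd xs, last xs}"
    using e_xs xs_ne xs(1) by (simp add: hd_conv_nth last_conv_nth insert_commute)
  ultimately show ?thesis
    using xs(1) by blast
qed

lemma detour_bound_if_short_cycles:
  assumes "graph V E" "\<forall>e\<in>E. \<exists>k\<le>L + 1. in_cycle_of_length E e k"
  shows "detour_bound V E L"
  unfolding detour_bound_def
  using assms cycle_detour by (metis (no_types, lifting))

lemma detour_bound_if_diameter:
  assumes G: "graph V E" and diam: "\<forall>e\<in>E. diameter V (E - {e}) \<le> enat r"
  shows "detour_bound V E r"
  unfolding detour_bound_def
proof
  fix e assume "e \<in> E"
  then obtain a b where ab: "e = {a, b}" "a \<in> V" "b \<in> V"
    using G by (auto elim: graph_edgeE)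
  have "dist V (E - {e}) a b \<le> (SUP v\<in>V. dist V (E - {e}) a v)"
    using ab by (intro SUP_upper)
  also have "\<dots> \<le> diameter V (E - {e})"
    unfolding diameter_def using ab
    by (intro SUP_upper[where f = "\<lambda>u. SUP v\<in>V. dist V (E - {e}) u v"])
  also have "\<dots> < enat (Suc r)"
    using diam \<open>e \<in> E\<close> by (auto intro: order_le_less_trans)
  finally obtain xs where "walk V (E - {e}) xs" "hd xs = a" "last xs = b" "length xs - 1 < Suc r"
    unfolding dist_def INF_less_iff by auto
  with ab show "\<exists>xs. walk V (E - {e}) xs \<and> e = {hd xs, last xs} \<and> length xs \<le> r + 1"
    by auto
qed

lemma detour_bound_if_no_cut_edge:
  assumes G: "graph V E" "connected_graph V E" and no_cut: "\<forall>e\<in>E. \<not> cut_edge V E e"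
  obtains L where "1 \<le> L" "detour_bound V E L"
proof -
  have "eventually (\<lambda>L. \<exists>xs. walk V (E - {e}) xs \<and> e = {hd xs, last xs} \<and> length xs \<le> L + 1)
      sequentially" if "e \<in> E" for e
  proof -
    obtain a b where ab: "e = {a, b}"
      using G(1) \<open>e \<in> E\<close> by (auto elim: graph_edgeE)
    then have "reachable V (E - {e}) a b"
      using cut_edge_iff_not_reachable[OF G] no_cut \<open>e \<in> E\<close> by blast
    then obtain xs where "walk V (E - {e}) xs" "hd xs = a" "last xs = b"
      by (auto simp: reachable_def)
    then show ?thesis
      using ab by (auto simp: eventually_sequentially intro!: exI[of _ "length xs"])
  qed
  then have "eventually (\<lambda>L. 1 \<le> L \<and> detour_bound V E L) sequentially"
    unfolding detour_bound_def using finite_edges[OF G(1)]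
    by (intro eventually_conj eventually_ball_finite) (auto simp: eventually_sequentially)
  then show ?thesis
    using that by (auto simp: eventually_sequentially)
qed

lemma saturated_new_copy_uses_edge:
  assumes F: "graph VF EF" and sat: "saturated V E VF EF"
    and uv: "u \<in> V" "v \<in> V" "u \<noteq> v" "{u, v} \<notin> E"
  obtains f x y where "inj_on f VF" "f ` VF \<subseteq> V" "{x, y} \<in> EF" "{f x, f y} = {u, v}"
    "\<And>p q. {p, q} \<in> EF - {{x, y}} \<Longrightarrow> {f p, f q} \<in> E"
proof -
  obtain f where f: "inj_on f VF" "f ` VF \<subseteq> V"
    and f_edge: "\<And>x y. {x, y} \<in> EF \<Longrightarrow> {f x, f y} \<in> insert {u, v} E"
    using sat uv unfolding saturated_def contains_copy_def by blast
  have "\<exists>x y. {x, y} \<in> EF \<and> {f x, f y} = {u, v}"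
  proof (rule ccontr)
    assume "\<not> ?thesis"
    then have "contains_copy V E VF EF"
      using f f_edge unfolding contains_copy_def by blast
    with sat show False
      by (simp add: saturated_def)
  qed
  then obtain x y where xy: "{x, y} \<in> EF" "{f x, f y} = {u, v}"
    by blast
  have other_edges: "{f p, f q} \<in> E" if pq: "{p, q} \<in> EF - {{x, y}}" for p q
  proof -
    have "{p, q} \<subseteq> VF" "{x, y} \<subseteq> VF"
      using graph_edgeD[OF F] pq xy(1) by auto
    with pq have "f ` {p, q} \<noteq> f ` {x, y}"
      using inj_on_image_eq_iff[OF f(1)] by blast
    with xy(2) have "{f p, f q} \<noteq> {u, v}"
      by simp
    with pq f_edge show ?thesis
      by blast
  qed
  from that[OF f xy other_edges] show ?thesis .
qed

lemma saturated_short_walk: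
  assumes F: "graph VF EF" "detour_bound VF EF L" "1 \<le> L" and sat: "saturated V E VF EF"
    and uv: "u \<in> V" "v \<in> V"
  shows "\<exists>xs. walk V E xs \<and> hd xs = u \<and> last xs = v \<and> length xs \<le> L + 1"
proof -
  consider "u = v" | "u \<noteq> v" "{u, v} \<in> E" | "u \<noteq> v" "{u, v} \<notin> E"
    by blast
  then show ?thesis
  proof cases
    case 1
    with uv show ?thesis
      by (intro exI[of _ "[u]"]) simp
  next
    case 2
    with uv F(3) show ?thesis
      by (intro exI[of _ "[u, v]"]) simp
  next
    case 3
    obtain f x y where f: "inj_on f VF" "f ` VF \<subseteq> V" "{x, y} \<in> EF" "{f x, f y} = {u, v}"
      and f_edge: "\<And>p q. {p, q} \<in> EF - {{x, y}} \<Longrightarrow> {f p, f q} \<in> E"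
      using saturated_new_copy_uses_edge[OF F(1) sat uv 3] by blast
    obtain xs where xs: "walk VF (EF - {{x, y}}) xs" "{x, y} = {hd xs, last xs}" "length xs \<le> L + 1"
      using F(2) f(3) unfolding detour_bound_def by blast
    have "walk V E (map f xs)"
      using walk_map[OF xs(1) f(2) f_edge] .
    moreover have "{hd (map f xs), last (map f xs)} = {u, v}"
    proof -
      have "xs \<noteq> []"
        using xs(1) by (simp add: walk_def)
      then have "{hd (map f xs), last (map f xs)} = f ` {hd xs, last xs}"
        by (simp add: hd_map last_map)
      also have "\<dots> = {u, v}"
        using xs(2) f(4) by (metis image_empty image_insert)
      finally show ?thesis .
    qed
    ultimately obtain ys where "walk V E ys" "hd ys = u" "last ys = v" "length ys = length xs"
      by (rule walk_between) auto
    with xs(3) show ?thesis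
      by auto
  qed
qed

section \<open>Regular saturated graphs have many edges\<close>

fun graph_ball :: "'a set \<Rightarrow> 'a set set \<Rightarrow> 'a \<Rightarrow> nat \<Rightarrow> 'a set" where
  "graph_ball V E x 0 = {x}"
| "graph_ball V E x (Suc j) = graph_ball V E x j \<union> (\<Union>y\<in>graph_ball V E x j. {w \<in> V. {w, y} \<in> E})"

lemma graph_ball_mono: "j \<le> k \<Longrightarrow> graph_ball V E x j \<subseteq> graph_ball V E x k"
  by (rule lift_Suc_mono_le[of "graph_ball V E x"]) auto

lemma graph_ball_subset: "x \<in> V \<Longrightarrow> graph_ball V E x j \<subseteq> V"
  by (induction j) auto

lemma card_graph_ball:
  assumes V: "finite V" "\<forall>v\<in>V. degree V E v \<le> d" and x: "x \<in> V"
  shows "card (graph_ball V E x j) \<le> (d + 1) ^ j"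
proof (induction j)
  case (Suc j)
  let ?B = "graph_ball V E x j"
  let ?N = "\<lambda>y. {w \<in> V. {w, y} \<in> E}"
  have B: "finite ?B" "?B \<subseteq> V"
    using graph_ball_subset[OF x] V(1) finite_subset by blast+
  have "sum (\<lambda>y. card (?N y)) ?B \<le> card ?B * d"
    using V(2) B(2) sum_bounded_above[of ?B "\<lambda>y. card (?N y)" d] by (auto simp: degree_def)
  then have "card (\<Union>y\<in>?B. ?N y) \<le> card ?B * d"
    by (rule order_trans[OF card_UN_le[OF B(1)]])
  then have "card (graph_ball V E x (Suc j)) \<le> card ?B * (d + 1)"
    using card_Un_le[of ?B "\<Union>y\<in>?B. ?N y"] by (simp add: algebra_simps)
  also have "\<dots> \<le> (d + 1) ^ j * (d + 1)"
    using Suc.IH by (rule mult_right_mono) simp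
  also have "\<dots> = (d + 1) ^ Suc j"
    by (rule power_Suc2[symmetric])
  finally show ?case .
qed simp

lemma walk_last_in_graph_ball:
  assumes "walk V E xs"
  shows "last xs \<in> graph_ball V E (hd xs) (length xs - 1)"
proof -
  have "xs ! i \<in> graph_ball V E (hd xs) i" if "i < length xs" for i
    using that
  proof (induction i)
    case 0
    then show ?case
      by (simp add: hd_conv_nth)
  next
    case (Suc i)
    then have "xs ! i \<in> graph_ball V E (hd xs) i"
      by simp
    moreover have "{xs ! Suc i, xs ! i} \<in> E"
      using assms Suc.prems unfolding walk_def by (metis Suc_eq_plus1 insert_commute)
    moreover have "xs ! Suc i \<in> V"
      using assms Suc.prems nth_mem unfolding walk_def by blast
    ultimately show ?case
      by auto
  qed
  moreover have "xs \<noteq> []"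
    using assms by (simp add: walk_def)
  ultimately show ?thesis
    by (simp add: last_conv_nth)
qed

lemma card_le_moore_bound:
  assumes V: "finite V" "\<forall>v\<in>V. degree V E v \<le> d" and x: "x \<in> V"
    and walks: "\<forall>y\<in>V. \<exists>xs. walk V E xs \<and> hd xs = x \<and> last xs = y \<and> length xs \<le> L + 1"
  shows "card V \<le> (d + 1) ^ L"
proof -
  have "V \<subseteq> graph_ball V E x L"
  proof
    fix y assume "y \<in> V"
    then obtain xs where xs: "walk V E xs" "hd xs = x" "last xs = y" "length xs \<le> L + 1"
      using walks by blast
    then have "y \<in> graph_ball V E x (length xs - 1)"
      using walk_last_in_graph_ball by metis
    moreover have "length xs - 1 \<le> L"
      using xs(4) by simp
    ultimately show "y \<in> graph_ball V E x L"
      using graph_ball_mono[of "length xs - 1" L V E x] by blast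
  qed
  moreover have "finite (graph_ball V E x L)"
    using graph_ball_subset[OF x] V(1) by (rule finite_subset)
  ultimately have "card V \<le> card (graph_ball V E x L)"
    by (rule card_mono[rotated])
  also have "\<dots> \<le> (d + 1) ^ L"
    using card_graph_ball[OF V x] .
  finally show ?thesis .
qed

lemma sum_degree_le:
  assumes G: "graph V E"
  shows "(\<Sum>v\<in>V. degree V E v) \<le> 2 * card E"
proof -
  let ?ends = "\<lambda>e. {(a, b). e = {a, b}}"
  have ends: "finite (?ends e) \<and> card (?ends e) \<le> 2" if "e \<in> E" for e
  proof -
    obtain x y where "e = {x, y}"
      using G \<open>e \<in> E\<close> by (auto elim: graph_edgeE)
    then have "?ends e = {(x, y), (y, x)}"
      by (auto simp: doubleton_eq_iff)
    then show ?thesis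
      by (simp add: card_insert_le_m1)
  qed
  have "finite V"
    using G by (simp add: graph_def)
  then have "(\<Sum>v\<in>V. degree V E v) = card (SIGMA v:V. {u \<in> V. {u, v} \<in> E})"
    by (simp add: degree_def)
  also have "\<dots> \<le> card (\<Union>e\<in>E. ?ends e)"
  proof (rule card_mono)
    show "finite (\<Union>e\<in>E. ?ends e)"
      using ends finite_edges[OF G] by (intro finite_UN_I) auto
    show "(SIGMA v:V. {u \<in> V. {u, v} \<in> E}) \<subseteq> (\<Union>e\<in>E. ?ends e)"
    proof
      fix p assume "p \<in> (SIGMA v:V. {u \<in> V. {u, v} \<in> E})"
      then obtain v u where "p = (v, u)" "{u, v} \<in> E"
        by blast
      then show "p \<in> (\<Union>e\<in>E. ?ends e)"
        by (intro UN_I[of "{u, v}"]) (simp_all add: insert_commute)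
    qed
  qed
  also have "\<dots> \<le> (\<Sum>e\<in>E. card (?ends e))"
    by (rule card_UN_le[OF finite_edges[OF G]])
  also have "\<dots> \<le> 2 * card E"
    using ends sum_bounded_above[of E "\<lambda>e. card (?ends e)" 2] by (simp add: mult.commute)
  finally show ?thesis .
qed

lemma rsat_attained:
  assumes "rsat_defined n VF EF"
  obtains E where "E \<in> rsat_graphs n VF EF" "rsat n VF EF = card E"
proof -
  have "rsat n VF EF \<in> card ` rsat_graphs n VF EF"
    using assms unfolding rsat_def rsat_defined_def by (intro Inf_nat_def1) simp
  with that show ?thesis
    by blast
qed

lemma rsat_le_card: "E \<in> rsat_graphs n VF EF \<Longrightarrow> rsat n VF EF \<le> card E"
  unfolding rsat_def by (simp add: cInf_lower)

lemma rsat_degree_bound: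
  assumes F: "graph VF EF" "detour_bound VF EF L" "1 \<le> L"
    and n: "rsat_defined n VF EF" "1 \<le> n"
  obtains d where "n \<le> (d + 1) ^ L" "n * d \<le> 2 * rsat n VF EF"
proof -
  obtain E where E: "graph {0..<n} E" "regular {0..<n} E" "saturated {0..<n} E VF EF"
    and rsat: "rsat n VF EF = card E"
    using rsat_attained[OF n(1)] unfolding rsat_graphs_def by blast
  obtain d where d: "\<forall>v\<in>{0..<n}. degree {0..<n} E v = d"
    using E(2) unfolding regular_def by blast
  have "card {0..<n} \<le> (d + 1) ^ L"
    using saturated_short_walk[OF F E(3)] d n(2) by (intro card_le_moore_bound[where x = 0]) auto
  moreover have "(\<Sum>v\<in>{0..<n}. degree {0..<n} E v) \<le> 2 * card E"
    using sum_degree_le[OF E(1)] .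
  ultimately show ?thesis
    using that d rsat by (simp add: mult.commute)
qed

lemma eventually_rsat_filter:
  "eventually P (rsat_filter VF EF) \<longleftrightarrow> (\<exists>N. \<forall>n\<ge>N. rsat_defined n VF EF \<longrightarrow> P n)"
  by (simp add: rsat_filter_def eventually_inf_principal eventually_sequentially)

lemma rsat_bigomega:
  assumes F: "graph VF EF" "detour_bound VF EF L" "1 \<le> L"
  shows "(\<lambda>n. real (rsat n VF EF)) \<in> \<Omega>[rsat_filter VF EF](\<lambda>n. real n powr (1 + 1 / real L))"
proof (rule landau_omega.bigI)
  have "real n powr (1 + 1 / real L) \<le> 4 * real (rsat n VF EF)"
    if n: "rsat_defined n VF EF" "2 ^ L \<le> n" for n
  proof -
    have "1 \<le> n"
      using n(2) one_le_power[of "2::nat" L] by linarith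
    then obtain d where d: "n \<le> (d + 1) ^ L" "n * d \<le> 2 * rsat n VF EF"
      using rsat_degree_bound[OF F n(1)] by blast
    define x where "x = real n powr (1 / real L)"
    have "x ^ L = real n"
      using \<open>1 \<le> n\<close> F(3) by (simp add: x_def powr_realpow[symmetric] powr_powr)
    then have "x ^ L \<le> (real d + 1) ^ L" "2 ^ L \<le> x ^ L"
      using d(1) n(2) by (metis of_nat_1 of_nat_add of_nat_le_iff of_nat_power,
          metis of_nat_le_iff of_nat_numeral of_nat_power)
    then have x: "x \<le> real d + 1" "2 \<le> x"
      using F(3) by (simp_all add: x_def)
    have "real n powr (1 + 1 / real L) = real n * x"
      using \<open>1 \<le> n\<close> by (simp add: x_def powr_add)
    also have "\<dots> \<le> real n * (2 * real d)"
      using x by (intro mult_left_mono) simp_all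
    also have "\<dots> \<le> 4 * real (rsat n VF EF)"
      using of_nat_mono[OF d(2), where 'a = real] by (simp add: mult.commute)
    finally show ?thesis .
  qed
  then show "eventually
      (\<lambda>n. 1 / 4 * norm (real n powr (1 + 1 / real L)) \<le> norm (real (rsat n VF EF)))
      (rsat_filter VF EF)"
    unfolding eventually_rsat_filter by (intro exI[of _ "2 ^ L"]) (simp add: mult.commute)
qed simp

lemma rsat_superlinear:
  assumes F: "graph VF EF" "detour_bound VF EF L" "1 \<le> L"
  shows "eventually (\<lambda>n. K * n \<le> rsat n VF EF) (rsat_filter VF EF)"
  unfolding eventually_rsat_filter
proof (intro exI allI impI)
  fix n assume n: "Suc ((2 * K) ^ L) \<le> n" "rsat_defined n VF EF"
  then obtain d where d: "n \<le> (d + 1) ^ L" "n * d \<le> 2 * rsat n VF EF"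
    using rsat_degree_bound[OF F n(2)] by auto
  have "2 * K \<le> d"
  proof (rule ccontr)
    assume "\<not> 2 * K \<le> d"
    then have "(d + 1) ^ L \<le> (2 * K) ^ L"
      by (intro power_mono) simp_all
    with d(1) n(1) show False
      by simp
  qed
  then have "n * (2 * K) \<le> 2 * rsat n VF EF"
    using d(2) by (meson le_trans mult_le_mono2)
  then show "K * n \<le> rsat n VF EF"
    by (simp add: mult.commute)
qed

lemma Liminf_rsat_ratio_infinite:
  assumes "graph VF EF" "detour_bound VF EF L" "1 \<le> L"
  shows "Liminf (rsat_filter VF EF) (\<lambda>n. ereal (real (rsat n VF EF) / real n)) = \<infinity>"
proof (rule ereal_top)
  fix B :: real
  have "eventually (\<lambda>n. 1 \<le> n) (rsat_filter VF EF)"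
    unfolding eventually_rsat_filter by auto
  with rsat_superlinear[OF assms, of "nat \<lceil>B\<rceil>"]
  have "eventually (\<lambda>n. ereal B \<le> ereal (real (rsat n VF EF) / real n)) (rsat_filter VF EF)"
  proof eventually_elim
    case (elim n)
    have "B * real n \<le> real (nat \<lceil>B\<rceil>) * real n"
      by (intro mult_right_mono) (simp_all add: real_nat_ceiling_ge)
    also have "\<dots> \<le> real (rsat n VF EF)"
      using elim(1) by (metis of_nat_le_iff of_nat_mult)
    finally show ?case
      using elim(2) by (simp add: pos_le_divide_eq)
  qed
  then show "ereal B \<le> Liminf (rsat_filter VF EF) (\<lambda>n. ereal (real (rsat n VF EF) / real n))"
    by (rule Liminf_bounded)
qed

section \<open>Disjoint cliques\<close>

lemma card_le_inj_sending:
  assumes "finite S" "finite A" "card S \<le> card A" "a \<in> S" "u \<in> A"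
  obtains g where "inj_on g S" "g ` S \<subseteq> A" "g a = u"
proof -
  have "card (S - {a}) \<le> card (A - {u})"
    using assms by simp
  then obtain h where h: "h ` (S - {a}) \<subseteq> A - {u}" "inj_on h (S - {a})"
    using card_le_inj[of "S - {a}" "A - {u}"] assms(1,2) by blast
  have "inj_on (h(a := u)) S"
  proof (rule inj_onI)
    fix x y assume "x \<in> S" "y \<in> S" "(h(a := u)) x = (h(a := u)) y"
    with h show "x = y"
      by (cases "x = a"; cases "y = a") (auto dest: inj_onD)
  qed
  then show ?thesis
    using that h(1) assms(5) by (auto simp: image_subset_iff)
qed

lemma contains_copy_join_cliques:
  assumes F: "graph VF EF" and ab: "{a, b} \<in> EF" and bridge: "\<not> reachable VF (EF - {{a, b}}) a b"
    and A: "finite A" "u \<in> A" "A \<subseteq> V" "card VF \<le> card A + 1" "\<forall>x\<in>A. \<forall>y\<in>A. x \<noteq> y \<longrightarrow> {x, y} \<in> E"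
    and B: "finite B" "v \<in> B" "B \<subseteq> V" "card VF \<le> card B + 1" "\<forall>x\<in>B. \<forall>y\<in>B. x \<noteq> y \<longrightarrow> {x, y} \<in> E"
    and disjoint: "A \<inter> B = {}"
  shows "contains_copy V (insert {u, v} E) VF EF"
proof -
  have "a \<in> VF" "b \<in> VF" "finite VF"
    using graph_edgeD[OF F ab] F by (simp_all add: graph_def)
  define S where "S = {x \<in> VF. reachable VF (EF - {{a, b}}) a x}"
  have S: "a \<in> S" "b \<notin> S" "S \<subseteq> VF"
    using \<open>a \<in> VF\<close> bridge by (auto simp: S_def reachable_refl)
  have same_side: "x \<in> S \<longleftrightarrow> y \<in> S" if "{x, y} \<in> EF" "{x, y} \<noteq> {a, b}" for x y
  proof -
    have "{x, y} \<in> EF - {{a, b}}" "{y, x} \<in> EF - {{a, b}}"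
      using that by (simp_all add: insert_commute)
    moreover have "x \<in> VF" "y \<in> VF"
      using graph_edgeD[OF F that(1)] by simp_all
    ultimately show ?thesis
      unfolding S_def using reachable_step[of VF "EF - {{a, b}}" a] by blast
  qed
  have "card S \<le> card (VF - {b})"
    using S \<open>finite VF\<close> by (intro card_mono) auto
  then have "card S \<le> card A"
    using \<open>b \<in> VF\<close> \<open>finite VF\<close> A(4) by simp
  then obtain g where g: "inj_on g S" "g ` S \<subseteq> A" "g a = u"
    using card_le_inj_sending[of S A a u] S(1,3) \<open>finite VF\<close> A(1,2) finite_subset by blast
  have "card (VF - S) \<le> card (VF - {a})"
    using S \<open>finite VF\<close> by (intro card_mono) auto
  then have "card (VF - S) \<le> card B"
    using \<open>a \<in> VF\<close> \<open>finite VF\<close> B(4) by simp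
  then obtain h where h: "inj_on h (VF - S)" "h ` (VF - S) \<subseteq> B" "h b = v"
    using card_le_inj_sending[of "VF - S" B b v] S(2) \<open>b \<in> VF\<close> \<open>finite VF\<close> B(1,2) by blast
  define f where "f x = (if x \<in> S then g x else h x)" for x
  have f_A: "f x \<in> A" if "x \<in> S" for x
    using that g(2) by (auto simp: f_def)
  have f_B: "f x \<in> B" if "x \<in> VF - S" for x
    using that h(2) by (auto simp: f_def)
  have "inj_on f (S \<union> (VF - S))"
    unfolding inj_on_Un
  proof (intro conjI)
    have "inj_on f S \<longleftrightarrow> inj_on g S" "inj_on f (VF - S) \<longleftrightarrow> inj_on h (VF - S)"
      by (rule inj_on_cong, simp add: f_def)+
    with g(1) h(1) show "inj_on f S" "inj_on f (VF - S)"
      by simp_all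
    have "f ` (S - (VF - S)) \<subseteq> A" "f ` ((VF - S) - S) \<subseteq> B"
      using f_A f_B by (auto intro!: image_subsetI)
    with disjoint show "f ` (S - (VF - S)) \<inter> f ` ((VF - S) - S) = {}"
      by blast
  qed
  then have inj: "inj_on f VF"
    using S(3) by (simp add: Un_absorb1)
  have "f ` VF \<subseteq> V"
    using f_A f_B A(3) B(3) by blast
  moreover have "{f x, f y} \<in> insert {u, v} E" if xy: "{x, y} \<in> EF" for x y
  proof (cases "{x, y} = {a, b}")
    case True
    have "f a = u" "f b = v"
      using S g(3) h(3) \<open>b \<in> VF\<close> by (simp_all add: f_def)
    with True show ?thesis
      by (auto simp: doubleton_eq_iff)
  next
    case False
    have "x \<in> VF" "y \<in> VF" "x \<noteq> y"
      using graph_edgeD[OF F xy] by simp_all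
    then have "f x \<noteq> f y"
      using inj by (auto dest: inj_onD)
    moreover have "(f x \<in> A \<and> f y \<in> A) \<or> (f x \<in> B \<and> f y \<in> B)"
      using same_side[OF xy False] f_A f_B \<open>x \<in> VF\<close> \<open>y \<in> VF\<close> by blast
    ultimately show ?thesis
      using A(5) B(5) by blast
  qed
  ultimately show ?thesis
    unfolding contains_copy_def using inj by blast
qed

lemma div_eq_iff_mem_block:
  fixes t y b :: nat
  assumes "0 < t"
  shows "y div t = b \<longleftrightarrow> y \<in> {b * t..<b * t + t}"
proof
  assume "y div t = b"
  moreover have "y div t * t + y mod t = y" "y mod t < t"
    using assms by simp_all
  ultimately show "y \<in> {b * t..<b * t + t}"
    by auto
next
  assume "y \<in> {b * t..<b * t + t}"
  then show "y div t = b"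
    by (intro div_nat_eqI) (auto simp: algebra_simps)
qed

lemma block_subset:
  fixes x q t :: nat
  assumes "x < q * t"
  shows "{x div t * t..<x div t * t + t} \<subseteq> {0..<q * t}"
proof -
  have "x div t < q"
    using assms by (simp add: less_mult_imp_div_less)
  then have "x div t * t + t \<le> q * t"
    by (metis add.commute mult_Suc less_eq_Suc_le mult_le_mono1)
  then show ?thesis
    by auto
qed

definition clique_blocks :: "nat \<Rightarrow> nat \<Rightarrow> nat set set" where
  "clique_blocks t n = {{x, y} | x y. x < n \<and> y < n \<and> x \<noteq> y \<and> x div t = y div t}"

lemma doubleton_mem_clique_blocks [simp]:
  "{u, v} \<in> clique_blocks t n \<longleftrightarrow> u < n \<and> v < n \<and> u \<noteq> v \<and> u div t = v div t"
  unfolding clique_blocks_def by (auto simp: doubleton_eq_iff)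

lemma graph_clique_blocks: "graph {0..<n} (clique_blocks t n)"
  unfolding graph_def clique_blocks_def by auto

lemma degree_clique_blocks:
  assumes "0 < t" "v < q * t"
  shows "degree {0..<q * t} (clique_blocks t (q * t)) v = t - 1"
proof -
  have "{u \<in> {0..<q * t}. {u, v} \<in> clique_blocks t (q * t)} = {v div t * t..<v div t * t + t} - {v}"
  proof (intro set_eqI iffI)
    fix u assume "u \<in> {u \<in> {0..<q * t}. {u, v} \<in> clique_blocks t (q * t)}"
    then show "u \<in> {v div t * t..<v div t * t + t} - {v}"
      using div_eq_iff_mem_block[OF assms(1), of u "v div t"] by simp
  next
    fix u assume "u \<in> {v div t * t..<v div t * t + t} - {v}"
    then show "u \<in> {u \<in> {0..<q * t}. {u, v} \<in> clique_blocks t (q * t)}"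
      using assms(2) block_subset[OF assms(2)] div_eq_iff_mem_block[OF assms(1), of u "v div t"]
      by auto
  qed
  moreover have "v \<in> {v div t * t..<v div t * t + t}"
    using div_eq_iff_mem_block[OF assms(1)] by blast
  ultimately show ?thesis
    by (simp add: degree_def)
qed

lemma card_clique_blocks_le:
  assumes "0 < t"
  shows "card (clique_blocks t n) \<le> n * t"
proof -
  let ?P = "SIGMA x:{0..<n}. {x div t * t..<x div t * t + t}"
  have "clique_blocks t n \<subseteq> (\<lambda>(x, y). {x, y}) ` ?P"
  proof
    fix e assume "e \<in> clique_blocks t n"
    then obtain x y where "e = {x, y}" "x < n" "x div t = y div t"
      unfolding clique_blocks_def by blast
    then show "e \<in> (\<lambda>(x, y). {x, y}) ` ?P"
      using div_eq_iff_mem_block[OF assms, of y "x div t"]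
      by (intro image_eqI[of _ _ "(x, y)"]) simp_all
  qed
  then have "card (clique_blocks t n) \<le> card ((\<lambda>(x, y). {x, y}) ` ?P)"
    by (intro card_mono) simp_all
  also have "\<dots> \<le> card ?P"
    by (rule card_image_le) simp
  also have "\<dots> = n * t"
    by simp
  finally show ?thesis .
qed

lemma clique_blocks_copy_free:
  assumes "0 < t" "connected_graph VF EF" "t < card VF"
  shows "\<not> contains_copy {0..<n} (clique_blocks t n) VF EF"
proof
  assume "contains_copy {0..<n} (clique_blocks t n) VF EF"
  then obtain f where f: "inj_on f VF" "\<And>x y. {x, y} \<in> EF \<Longrightarrow> {f x, f y} \<in> clique_blocks t n"
    unfolding contains_copy_def by blast
  obtain a where a: "a \<in> VF"
    using assms(3) by fastforce
  have "f x div t = f a div t" if "x \<in> VF" for x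
  proof -
    have "(adjacent VF EF)\<^sup>*\<^sup>* a x"
      using assms(2) a that by (simp add: connected_graph_def reachable_iff_rtranclp)
    then show ?thesis
    proof (induction rule: rtranclp_induct)
      case (step y z)
      then show ?case
        using f(2)[of y z] by (simp add: adjacent_def)
    qed simp
  qed
  then have "f ` VF \<subseteq> {f a div t * t..<f a div t * t + t}"
    using div_eq_iff_mem_block[OF assms(1)] by blast
  then have "card (f ` VF) \<le> t"
    using card_mono[of "{f a div t * t..<f a div t * t + t}" "f ` VF"] by simp
  with assms(3) card_image[OF f(1)] show False
    by simp
qed

lemma clique_blocks_saturated:
  assumes F: "graph VF EF" "connected_graph VF EF" and ab: "{a, b} \<in> EF"
    and bridge: "\<not> reachable VF (EF - {{a, b}}) a b" and t: "0 < t" "card VF = t + 1"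
  shows "saturated {0..<q * t} (clique_blocks t (q * t)) VF EF"
  unfolding saturated_def
proof (intro conjI ballI impI)
  show "\<not> contains_copy {0..<q * t} (clique_blocks t (q * t)) VF EF"
    using clique_blocks_copy_free[OF t(1) F(2)] t(2) by simp
  fix u v assume uv: "u \<in> {0..<q * t}" "v \<in> {0..<q * t}" "u \<noteq> v \<and> {u, v} \<notin> clique_blocks t (q * t)"
  define block where "block x = {x div t * t..<x div t * t + t}" for x
  have in_block: "y \<in> block x \<longleftrightarrow> y div t = x div t" for x y
    by (simp add: block_def div_eq_iff_mem_block[OF t(1)])
  have block: "finite (block x)" "x \<in> block x" "block x \<subseteq> {0..<q * t}"
      "card VF \<le> card (block x) + 1"
      "\<forall>y\<in>block x. \<forall>z\<in>block x. y \<noteq> z \<longrightarrow> {y, z} \<in> clique_blocks t (q * t)"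
    if "x < q * t" for x
  proof -
    show "finite (block x)" "block x \<subseteq> {0..<q * t}" "card VF \<le> card (block x) + 1"
      using block_subset[OF that] t(2) by (simp_all add: block_def)
    then show "x \<in> block x" "\<forall>y\<in>block x. \<forall>z\<in>block x. y \<noteq> z \<longrightarrow> {y, z} \<in> clique_blocks t (q * t)"
      using in_block by auto
  qed
  have "u < q * t" "v < q * t"
    using uv by simp_all
  moreover have "block u \<inter> block v = {}"
    using uv in_block by auto
  ultimately show "contains_copy {0..<q * t} (insert {u, v} (clique_blocks t (q * t))) VF EF"
    using contains_copy_join_cliques[OF F(1) ab bridge block[of u] block[of v]] by simp
qed

lemma clique_blocks_rsat_graph:
  assumes "graph VF EF" "connected_graph VF EF" "{a, b} \<in> EF"
    and "\<not> reachable VF (EF - {{a, b}}) a b" "0 < t" "card VF = t + 1"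
  shows "clique_blocks t (q * t) \<in> rsat_graphs (q * t) VF EF"
  unfolding rsat_graphs_def regular_def
  using graph_clique_blocks degree_clique_blocks[OF assms(5)] clique_blocks_saturated[OF assms]
  by auto

section \<open>Linear growth of the saturation number\<close>

lemma Liminf_le_if_frequently:
  fixes f :: "'a \<Rightarrow> 'b::complete_linorder"
  assumes "frequently (\<lambda>x. f x \<le> c) F"
  shows "Liminf F f \<le> c"
proof (rule Liminf_least)
  fix P assume "eventually P F"
  with assms have "frequently (\<lambda>x. P x \<and> f x \<le> c) F"
    by (rule frequently_eventually_conj)
  then obtain x where "P x" "f x \<le> c"
    using frequently_ex by blast
  then show "(INF x\<in>Collect P. f x) \<le> c"
    by (blast intro: INF_lower2)
qed

lemma frequently_rsat_filter:
  "frequently P (rsat_filter VF EF) \<longleftrightarrow> (\<forall>N. \<exists>n\<ge>N. rsat_defined n VF EF \<and> P n)"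
  unfolding frequently_def eventually_rsat_filter by auto

lemma Liminf_rsat_ratio_le_if_bridge:
  assumes F: "graph VF EF" "connected_graph VF EF" and ab: "{a, b} \<in> EF"
    and bridge: "\<not> reachable VF (EF - {{a, b}}) a b"
  shows "Liminf (rsat_filter VF EF) (\<lambda>n. ereal (real (rsat n VF EF) / real n))
    \<le> ereal (real (card VF - 1))"
proof (rule Liminf_le_if_frequently)
  define t where "t = card VF - 1"
  have "card {a, b} \<le> card VF"
    using F(1) graph_edgeD[OF F(1) ab] by (intro card_mono) (auto simp: graph_def)
  then have t: "0 < t" "card VF = t + 1"
    using graph_edgeD[OF F(1) ab] by (auto simp: t_def)
  show "frequently (\<lambda>n. ereal (real (rsat n VF EF) / real n) \<le> ereal (real (card VF - 1)))
      (rsat_filter VF EF)"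
    unfolding frequently_rsat_filter
  proof
    fix N
    let ?n = "Suc N * t"
    have E: "clique_blocks t ?n \<in> rsat_graphs ?n VF EF"
      by (rule clique_blocks_rsat_graph[OF F ab bridge t])
    then have "rsat ?n VF EF \<le> ?n * t"
      using rsat_le_card card_clique_blocks_le[OF t(1)] le_trans by blast
    then have "real (rsat ?n VF EF) \<le> real t * real ?n"
      by (metis mult.commute of_nat_le_iff of_nat_mult)
    moreover have "0 < real ?n"
      using t(1) by (simp only: of_nat_0_less_iff nat_0_less_mult_iff zero_less_Suc)
    ultimately have "real (rsat ?n VF EF) / real ?n \<le> real t"
      by (simp only: pos_divide_le_eq)
    moreover have "N \<le> ?n"
      using mult_le_mono2[of 1 t "Suc N"] t(1) by simp
    moreover have "rsat_defined ?n VF EF"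
      using E by (auto simp: rsat_defined_def)
    ultimately show "\<exists>n\<ge>N. rsat_defined n VF EF
        \<and> ereal (real (rsat n VF EF) / real n) \<le> ereal (real (card VF - 1))"
      unfolding t_def by auto
  qed
qed

lemma Liminf_rsat_ratio_bounded_iff_cut_edge:
  assumes F: "graph VF EF" "connected_graph VF EF"
  shows "(\<exists>c. Liminf (rsat_filter VF EF) (\<lambda>n. ereal (real (rsat n VF EF) / real n)) \<le> ereal c)
    \<longleftrightarrow> (\<exists>e\<in>EF. cut_edge VF EF e)"
proof
  assume bounded:
    "\<exists>c. Liminf (rsat_filter VF EF) (\<lambda>n. ereal (real (rsat n VF EF) / real n)) \<le> ereal c"
  show "\<exists>e\<in>EF. cut_edge VF EF e"
  proof (rule ccontr)
    assume "\<not> (\<exists>e\<in>EF. cut_edge VF EF e)"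
    then obtain L where "1 \<le> L" "detour_bound VF EF L"
      using detour_bound_if_no_cut_edge[OF F] by blast
    with bounded show False
      using Liminf_rsat_ratio_infinite[OF F(1)] by fastforce
  qed
next
  assume "\<exists>e\<in>EF. cut_edge VF EF e"
  then obtain a b where "{a, b} \<in> EF" "cut_edge VF EF {a, b}"
    using F(1) by (auto elim: graph_edgeE)
  then show "\<exists>c. Liminf (rsat_filter VF EF) (\<lambda>n. ereal (real (rsat n VF EF) / real n)) \<le> ereal c"
    using Liminf_rsat_ratio_le_if_bridge[OF F] cut_edge_iff_not_reachable[OF F] by blast
qed

theorem proposition1p2:
  fixes VF :: "'b set" and EF :: "'b set set"
  assumes F: "graph VF EF"
  shows
   "(\<forall>m::nat. m \<ge> 1 \<longrightarrow>
       (\<forall>e\<in>EF. \<exists>k\<le>m + 1. in_cycle_of_length EF e k) \<longrightarrow>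
       (\<lambda>n. real (rsat n VF EF)) \<in> \<Omega>[rsat_filter VF EF](\<lambda>n. real n powr (1 + 1 / real m)))
  \<and> (\<forall>r::nat. r \<ge> 1 \<longrightarrow>
       (\<forall>e\<in>EF. diameter VF (EF - {e}) \<le> enat r) \<longrightarrow>
       (\<lambda>n. real (rsat n VF EF)) \<in> \<Omega>[rsat_filter VF EF](\<lambda>n. real n powr (1 + 1 / real r)))
  \<and> (connected_graph VF EF \<longrightarrow>
       ((\<exists>c::real. Liminf (rsat_filter VF EF) (\<lambda>n. ereal (real (rsat n VF EF) / real n)) \<le> ereal c)
        \<longleftrightarrow> (\<exists>e\<in>EF. cut_edge VF EF e)))"
proof (intro conjI allI impI)
  fix m :: nat
  assume "m \<ge> 1" "\<forall>e\<in>EF. \<exists>k\<le>m + 1. in_cycle_of_length EF e k"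
  then show "(\<lambda>n. real (rsat n VF EF)) \<in> \<Omega>[rsat_filter VF EF](\<lambda>n. real n powr (1 + 1 / real m))"
    using rsat_bigomega[OF F detour_bound_if_short_cycles[OF F]] by blast
next
  fix r :: nat
  assume "r \<ge> 1" "\<forall>e\<in>EF. diameter VF (EF - {e}) \<le> enat r"
  then show "(\<lambda>n. real (rsat n VF EF)) \<in> \<Omega>[rsat_filter VF EF](\<lambda>n. real n powr (1 + 1 / real r))"
    using rsat_bigomega[OF F detour_bound_if_diameter[OF F]] by blast
next
  assume "connected_graph VF EF"
  with F show "(\<exists>c. Liminf (rsat_filter VF EF) (\<lambda>n. ereal (real (rsat n VF EF) / real n)) \<le> ereal c)
      \<longleftrightarrow> (\<exists>e\<in>EF. cut_edge VF EF e)"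
    by (rule Liminf_rsat_ratio_bounded_iff_cut_edge)
qed

end
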